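(* If the knowledge connectivity graph satisfies the requirements of the BFT-CUPFT model, then the Core algorithm executed by any correct process eventually terminates.
   Context: BFT-CUPFT model: finite set $\Pi$ of processes, partially synchronous, Byzantine set $F$ with $|F|\le f$ where $f$ is unknown to the processes, reliable authenticated channels, unforgeable signatures ($\langle m\rangle_i$ = $m$ signed by $i$); each process $i$ is given only its participant detector $PD_i\subseteq\Pi$ and may only message processes it currently knows. Knowledge connectivity graph $G_{di}=(\Pi,\{(i,j):j\in PD_i\})$; $G_{safe}=G_{di}[\Pi\setminus F]$. $\kappa(H)$: largest $k$ such that all ordered pairs of distinct vertices are joined by $k$ node-disjoint paths. $A\xRightarrow{\le y}B$ / $A\xRightarrow{>y}B$: the maximum number of node-disjoint paths from $A$ to $B$ is $\le y$ / $>y$. $k$-OSR PD: underlying undirected graph connected, exactly one sink component $G_{sink}=(V_{sink},E_{sink})$ in the condensation, $G_{sink}$ $k$-strongly connected, every vertex outside $V_{sink}$ has $k$ node-disjoint paths to every vertex of $V_{sink}$. Extended $k$-OSR PD: $k$-OSR PD and there is $y\ge0$ such that exactly one $P\subseteq V_{sink}$ (the core) has $\kappa(P)\ge y+1$ and $P\xRightarrow{\le y}T$ for all nonempty $T\subseteq\Pi\setminus P$. Requirements of BFT-CUPFT: $G_{safe}$ in extended $(f+1)$-OSR PD, and its sink and its core each have at least $2f+1$ processes. Discovery algorithm at $i$: sets $\mathcal{S}_{PD}=\{\langle i,PD_i\rangle_i\}$, $\mathcal{S}_{known}=PD_i\cup\{i\}$, $\mathcal{S}_{received}=\{i\}$;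 periodically send $\textsc{GetPDs}$ to all of $\mathcal{S}_{known}$; answer $\textsc{GetPDs}$ with $\langle\textsc{SetPDs},\mathcal{S}_{PD}\rangle$; on $\langle\textsc{SetPDs},pds_j\rangle$ from $j$ containing a valid $\langle j,PD_j\rangle_j$, merge $pds_j$ into $\mathcal{S}_{PD}$, add all processes listed in the signed PDs to $\mathcal{S}_{known}$, and all signers to $\mathcal{S}_{received}$. Core algorithm at $i$: start Discovery concurrently; wait until there are an integer $y\ge0$ and $R\subseteq\mathcal{S}_{received}$ such that, in the graph built from the PDs in $\mathcal{S}_{PD}$, $\kappa(R)\ge y+1$ and every $K\subseteq(\mathcal{S}_{known}\cup\mathcal{S}_{received})\setminus R$ with $R\xRightarrow{>y}K$ has $|K|\le y$; then return $K\cup R$ if some such $K$ with $R\xRightarrow{>y}K$ exists, and $R$ otherwise. *)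

theory Defs
  imports Main
begin

text \<open>Since all vertices are
required to lie in V, a path in (V,E) is a path of the induced subgraph on V.\<close>
definition is_path :: "'p set \<Rightarrow> ('p \<times> 'p) set \<Rightarrow> 'p list \<Rightarrow> bool" where
  "is_path V E xs \<longleftrightarrow> xs \<noteq> [] \<and> distinct xs \<and> set xs \<subseteq> V \<and>
     (\<forall>n. Suc n < length xs \<longrightarrow> (xs ! n, xs ! Suc n) \<in> E)"

definition disj_paths_uv :: "'p set \<Rightarrow> ('p \<times> 'p) set \<Rightarrow> 'p \<Rightarrow> 'p \<Rightarrow> nat \<Rightarrow> bool" where
  "disj_paths_uv V E u v k \<longleftrightarrow> (\<exists>Ps. finite Ps \<and> card Ps = k \<and>
     (\<forall>p\<in>Ps. is_path V E p \<and> hd p = u \<and> last p = v) \<and>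
     (\<forall>p\<in>Ps. \<forall>q\<in>Ps. p \<noteq> q \<longrightarrow> set p \<inter> set q \<subseteq> {u, v}))"

text \<open>kappa(V,E) >= k: all ordered pairs of distinct vertices are joined by k
node-disjoint paths (with the standard convention kappa(H) <= |V(H)| - 1,
so that e.g. kappa(K_1) = 0).\<close>
definition kappa_ge :: "'p set \<Rightarrow> ('p \<times> 'p) set \<Rightarrow> nat \<Rightarrow> bool" where
  "kappa_ge V E k \<longleftrightarrow> finite V \<and> k + 1 \<le> card V \<and>
     (\<forall>u\<in>V. \<forall>v\<in>V. u \<noteq> v \<longrightarrow> disj_paths_uv V E u v k)"

definition conn_gt :: "'p set \<Rightarrow> ('p \<times> 'p) set \<Rightarrow> 'p set \<Rightarrow> 'p set \<Rightarrow> nat \<Rightarrow> bool" where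
  "conn_gt V E A B y \<longleftrightarrow> (\<exists>Ps. finite Ps \<and> card Ps = y + 1 \<and>
     (\<forall>p\<in>Ps. is_path V E p \<and> hd p \<in> A \<and> last p \<in> B) \<and>
     (\<forall>p\<in>Ps. \<forall>q\<in>Ps. p \<noteq> q \<longrightarrow> set p \<inter> set q = {}))"

definition reach :: "'p set \<Rightarrow> ('p \<times> 'p) set \<Rightarrow> ('p \<times> 'p) set" where
  "reach V E = (E \<inter> (V \<times> V))\<^sup>*"

definition undirected_connected :: "'p set \<Rightarrow> ('p \<times> 'p) set \<Rightarrow> bool" where
  "undirected_connected V E \<longleftrightarrow>
     (\<forall>u\<in>V. \<forall>v\<in>V. (u, v) \<in> ((E \<union> E\<inverse>) \<inter> (V \<times> V))\<^sup>*)"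

definition scc :: "'p set \<Rightarrow> ('p \<times> 'p) set \<Rightarrow> 'p set \<Rightarrow> bool" where
  "scc V E C \<longleftrightarrow> C \<noteq> {} \<and> C \<subseteq> V \<and>
     (\<forall>u\<in>C. \<forall>v\<in>C. (u, v) \<in> reach V E) \<and>
     (\<forall>u\<in>C. \<forall>v\<in>V. (u, v) \<in> reach V E \<and> (v, u) \<in> reach V E \<longrightarrow> v \<in> C)"

definition sink_comp :: "'p set \<Rightarrow> ('p \<times> 'p) set \<Rightarrow> 'p set \<Rightarrow> bool" where
  "sink_comp V E C \<longleftrightarrow> scc V E C \<and> (\<forall>u\<in>C. \<forall>v\<in>V - C. (u, v) \<notin> E)"

definition k_osr :: "'p set \<Rightarrow> ('p \<times> 'p) set \<Rightarrow> nat \<Rightarrow> bool" where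
  "k_osr V E k \<longleftrightarrow> undirected_connected V E \<and> (\<exists>!C. sink_comp V E C) \<and>
     (\<forall>C. sink_comp V E C \<longrightarrow> kappa_ge C E k \<and>
        (\<forall>u\<in>V - C. \<forall>w\<in>C. disj_paths_uv V E u w k))"

definition core_cand :: "'p set \<Rightarrow> ('p \<times> 'p) set \<Rightarrow> 'p set \<Rightarrow> nat \<Rightarrow> 'p set \<Rightarrow> bool" where
  "core_cand V E Vs y P \<longleftrightarrow> P \<subseteq> Vs \<and> kappa_ge P E (y + 1) \<and>
     (\<forall>T. T \<noteq> {} \<and> T \<subseteq> V - P \<longrightarrow> \<not> conn_gt V E P T y)"

definition ext_k_osr :: "'p set \<Rightarrow> ('p \<times> 'p) set \<Rightarrow> nat \<Rightarrow> bool" where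
  "ext_k_osr V E k \<longleftrightarrow> k_osr V E k \<and>
     (\<forall>Vs. sink_comp V E Vs \<longrightarrow> (\<exists>y. \<exists>!P. core_cand V E Vs y P))"

text \<open>Processes form the finite type 'p (Pi = UNIV).  Knowledge connectivity graph and G_safe.\<close>
definition G_di_edges :: "('p \<Rightarrow> 'p set) \<Rightarrow> ('p \<times> 'p) set" where
  "G_di_edges PD = {(a, b). b \<in> PD a}"

definition safe_V :: "'p set \<Rightarrow> 'p set" where
  "safe_V F = UNIV - F"

definition safe_E :: "('p \<Rightarrow> 'p set) \<Rightarrow> 'p set \<Rightarrow> ('p \<times> 'p) set" where
  "safe_E PD F = G_di_edges PD \<inter> (safe_V F \<times> safe_V F)"

definition bft_cupft_requirements :: "('p \<Rightarrow> 'p set) \<Rightarrow> 'p set \<Rightarrow> nat \<Rightarrow> bool" where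
  "bft_cupft_requirements PD F f \<longleftrightarrow>
     ext_k_osr (safe_V F) (safe_E PD F) (f + 1) \<and>
     (\<exists>Vs y P. sink_comp (safe_V F) (safe_E PD F) Vs \<and>
        core_cand (safe_V F) (safe_E PD F) Vs y P \<and>
        (\<forall>P'. core_cand (safe_V F) (safe_E PD F) Vs y P' \<longrightarrow> P' = P) \<and>
        2 * f + 1 \<le> card Vs \<and> 2 * f + 1 \<le> card P)"

text \<open>A signed PD <j, S>_j is modelled as the pair (j, S).  SPD i t is the set S_PD of
(correct) process i at time t.  The sets S_known and S_received are functions of it.\<close>
definition S_known :: "('p \<Rightarrow> 'p set) \<Rightarrow> 'p \<Rightarrow> ('p \<times> 'p set) set \<Rightarrow> 'p set" where
  "S_known PD i X = insert i (PD i \<union> \<Union> (snd ` X))"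

definition S_received :: "'p \<Rightarrow> ('p \<times> 'p set) set \<Rightarrow> 'p set" where
  "S_received i X = insert i (fst ` X)"

text \<open>Content M of a SetPDs message from j, received when the receiver is at time t:
it contains a signed PD of j; a correct j sends its own S_PD of some earlier time;
a Byzantine j may send anything, except that signatures of correct processes cannot be
forged (so a signed PD of a correct k is the true PD_k).\<close>
definition valid_msg ::
  "('p \<Rightarrow> 'p set) \<Rightarrow> 'p set \<Rightarrow> ('p \<Rightarrow> nat \<Rightarrow> ('p \<times> 'p set) set) \<Rightarrow> 'p \<Rightarrow> nat \<Rightarrow> ('p \<times> 'p set) set \<Rightarrow> bool" where
  "valid_msg PD F SPD j t M \<longleftrightarrow> (\<exists>S. (j, S) \<in> M) \<and>
     (j \<notin> F \<longrightarrow> (\<exists>t'\<le>t. M = SPD j t')) \<and>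
     (j \<in> F \<longrightarrow> (\<forall>k S. (k, S) \<in> M \<and> k \<notin> F \<longrightarrow> S = PD k))"

text \<open>Admissible executions of Discovery at the correct processes: initial state, each step
merges at most one received SetPDs message, and (reliable channels, partial synchrony,
periodic GetPDs to every known process, replies by correct processes) every correct
process eventually merges the state of every correct process it knows.\<close>
definition discovery_execution ::
  "('p \<Rightarrow> 'p set) \<Rightarrow> 'p set \<Rightarrow> ('p \<Rightarrow> nat \<Rightarrow> ('p \<times> 'p set) set) \<Rightarrow> bool" where
  "discovery_execution PD F SPD \<longleftrightarrow>
     (\<forall>i. i \<notin> F \<longrightarrow> SPD i 0 = {(i, PD i)}) \<and>
     (\<forall>i t. i \<notin> F \<longrightarrow> SPD i (Suc t) = SPD i t \<or>
        (\<exists>j M. valid_msg PD F SPD j t M \<and> SPD i (Suc t) = SPD i t \<union> M)) \<and>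
     (\<forall>i j t. i \<notin> F \<longrightarrow> j \<notin> F \<longrightarrow> j \<in> S_known PD i (SPD i t) \<longrightarrow>
        (\<exists>t'\<ge>t. SPD j t \<subseteq> SPD i t'))"

definition local_E :: "('p \<times> 'p set) set \<Rightarrow> ('p \<times> 'p) set" where
  "local_E X = {(a, b). \<exists>S. (a, S) \<in> X \<and> b \<in> S}"

definition core_wait_cond :: "('p \<Rightarrow> 'p set) \<Rightarrow> 'p \<Rightarrow> ('p \<times> 'p set) set \<Rightarrow> bool" where
  "core_wait_cond PD i X \<longleftrightarrow>
     (let Vl = S_known PD i X \<union> S_received i X; El = local_E X in
      \<exists>(y::nat) R. R \<subseteq> S_received i X \<and> kappa_ge R El (y + 1) \<and>
        (\<forall>K. K \<subseteq> Vl - R \<and> conn_gt Vl El R K y \<longrightarrow> card K \<le> y))"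

end

theory Submission
  imports Defs
begin

text \<open>Take the sink of G_safe as R and f as y.  Since every correct process reaches
every sink member along correct processes, Discovery eventually delivers all sink PDs
to i, so the sink is (f+1)-connected in i's local graph.  A signed PD of a correct
process is genuine and the sink has no outgoing edge in G_safe, so every edge of the
local graph leaving the sink ends at a Byzantine process.  Hence f+1 disjoint paths
leaving the sink would contain f+1 distinct Byzantine processes, which is impossible;
no K as in the wait condition exists at all.\<close>

lemma is_path_tl:
  assumes "is_path V E (x # y # zs)"
  shows "is_path V E (y # zs)"
  unfolding is_path_def
proof (intro conjI allI impI)
  show "y # zs \<noteq> []" "distinct (y # zs)" "set (y # zs) \<subseteq> V"
    using assms unfolding is_path_def by auto
  fix n assume "Suc n < length (y # zs)"
  then have "Suc (Suc n) < length (x # y # zs)" by simp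
  then show "((y # zs) ! n, (y # zs) ! Suc n) \<in> E"
    using assms unfolding is_path_def by (auto dest!: spec[of _ "Suc n"])
qed

lemma is_path_rtrancl: "is_path V E p \<Longrightarrow> (hd p, last p) \<in> E\<^sup>*"
proof (induction p rule: induct_list012)
  case (3 x y zs)
  have "(x, y) \<in> E"
    using "3.prems" unfolding is_path_def by (auto dest!: spec[of _ 0])
  moreover have "(y, last (y # zs)) \<in> E\<^sup>*"
    using "3.IH"(2)[OF is_path_tl[OF "3.prems"]] by simp
  ultimately show ?case by (simp add: converse_rtrancl_into_rtrancl)
qed (auto simp: is_path_def)

lemma is_path_mono:
  assumes "is_path V E p" "E \<inter> (V \<times> V) \<subseteq> E'"
  shows "is_path V E' p"
proof -
  have "(p ! n, p ! Suc n) \<in> E'" if "Suc n < length p" for n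
  proof -
    have "p ! n \<in> V" "p ! Suc n \<in> V"
      using assms(1) that nth_mem[of n p] nth_mem[of "Suc n" p] unfolding is_path_def by auto
    then show ?thesis using assms that unfolding is_path_def by blast
  qed
  then show ?thesis using assms(1) unfolding is_path_def by blast
qed

lemma kappa_ge_mono:
  assumes "kappa_ge V E k" "E \<inter> (V \<times> V) \<subseteq> E'"
  shows "kappa_ge V E' k"
proof -
  have "disj_paths_uv V E' u v k" if "disj_paths_uv V E u v k" for u v
    using that is_path_mono[OF _ assms(2)] unfolding disj_paths_uv_def by blast
  then show ?thesis using assms(1) unfolding kappa_ge_def by simp
qed

lemma list_exit_index:
  "xs \<noteq> [] \<Longrightarrow> hd xs \<in> A \<Longrightarrow> last xs \<notin> A \<Longrightarrow>
   \<exists>n. Suc n < length xs \<and> xs ! n \<in> A \<and> xs ! Suc n \<notin> A"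
proof (induction xs rule: induct_list012)
  case (3 x y zs)
  show ?case
  proof (cases "y \<in> A")
    case True
    then obtain n where "Suc n < length (y # zs)" "(y # zs) ! n \<in> A" "(y # zs) ! Suc n \<notin> A"
      using "3.IH"(2) "3.prems" by auto
    then show ?thesis by (intro exI[of _ "Suc n"]) auto
  next
    case False
    then show ?thesis using "3.prems" by (intro exI[of _ 0]) auto
  qed
qed auto

lemma not_conn_gt_if_exits_in:
  assumes exits: "\<And>a b. (a, b) \<in> E \<Longrightarrow> a \<in> A \<Longrightarrow> b \<notin> A \<Longrightarrow> b \<in> F"
    and "K \<inter> A = {}" and "finite F" and "card F \<le> y"
  shows "\<not> conn_gt V E A K y"
proof
  assume "conn_gt V E A K y"
  then obtain Ps where "card Ps = y + 1"
    and paths: "\<And>p. p \<in> Ps \<Longrightarrow> is_path V E p \<and> hd p \<in> A \<and> last p \<in> K"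
    and disjoint: "\<And>p q. p \<in> Ps \<Longrightarrow> q \<in> Ps \<Longrightarrow> p \<noteq> q \<Longrightarrow> set p \<inter> set q = {}"
    unfolding conn_gt_def by blast
  have "\<exists>b. b \<in> F \<and> b \<in> set p" if "p \<in> Ps" for p
  proof -
    have p: "is_path V E p" "hd p \<in> A" "last p \<notin> A"
      using paths[OF that] assms(2) by auto
    then obtain n where n: "Suc n < length p" "p ! n \<in> A" "p ! Suc n \<notin> A"
      using list_exit_index[of p A] unfolding is_path_def by blast
    then have "(p ! n, p ! Suc n) \<in> E" using p(1) unfolding is_path_def by blast
    then show ?thesis using exits n nth_mem by blast
  qed
  then have "card Ps \<le> card F"
    using card_le_if_inj_on_rel[of F Ps "\<lambda>p b. b \<in> set p"] \<open>finite F\<close> disjoint by blast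
  then show False using \<open>card Ps = y + 1\<close> \<open>card F \<le> y\<close> by linarith
qed

lemma k_osr_reaches_sink:
  assumes "k_osr V E k" "0 < k" "sink_comp V E C" "u \<in> V" "w \<in> C"
  shows "(u, w) \<in> E\<^sup>*"
proof (cases "u \<in> C")
  case True
  then have "(u, w) \<in> reach V E" using assms(3,5) unfolding sink_comp_def scc_def by blast
  then show ?thesis unfolding reach_def by (meson inf_le1 rtrancl_mono subsetD)
next
  case False
  then have "disj_paths_uv V E u w k" using assms unfolding k_osr_def by blast
  then obtain p where "is_path V E p" "hd p = u" "last p = w"
    unfolding disj_paths_uv_def using \<open>0 < k\<close> by (metis card.empty ex_in_conv less_irrefl)
  then show ?thesis using is_path_rtrancl by metis
qed

lemma discovery_SPD_mono:
  assumes "discovery_execution PD F SPD" "j \<notin> F" "t \<le> t'"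
  shows "SPD j t \<subseteq> SPD j t'"
proof -
  have "SPD j s \<subseteq> SPD j (Suc s)" for s
    using assms(1,2) unfolding discovery_execution_def by blast
  then show ?thesis using lift_Suc_mono_le[of "SPD j"] assms(3) by blast
qed

lemma discovery_correct_PD_genuine:
  assumes exec: "discovery_execution PD F SPD"
    and "j \<notin> F" "(k, S) \<in> SPD j t" "k \<notin> F"
  shows "S = PD k"
  using assms(2-)
proof (induction t arbitrary: j rule: less_induct)
  case (less t)
  show ?case
  proof (cases t)
    case 0
    then show ?thesis using exec less.prems unfolding discovery_execution_def by auto
  next
    case (Suc s)
    from exec less.prems(1) consider "SPD j t = SPD j s"
      | j' M where "valid_msg PD F SPD j' s M" "SPD j t = SPD j s \<union> M"
      unfolding discovery_execution_def Suc by blast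
    then show ?thesis
    proof cases
      case (2 j' M)
      show ?thesis
      proof (cases "(k, S) \<in> M")
        case True
        then show ?thesis
          using 2(1) less.IH less.prems(3) Suc unfolding valid_msg_def by (metis le_imp_less_Suc)
      qed (use 2 less Suc in auto)
    qed (use less Suc in auto)
  qed
qed

lemma discovery_propagates:
  assumes exec: "discovery_execution PD F SPD"
    and "(j, w) \<in> (safe_E PD F)\<^sup>*" "j \<notin> F"
  shows "eventually (\<lambda>t. SPD w 0 \<subseteq> SPD j t) sequentially"
  using assms(2,3)
proof (induction rule: converse_rtrancl_induct)
  case base
  then show ?case using discovery_SPD_mono[OF exec] by (auto simp: eventually_sequentially)
next
  case (step j k)
  have k: "k \<in> PD j" "k \<notin> F"
    using step.hyps(1) unfolding safe_E_def G_di_edges_def safe_V_def by auto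
  obtain t where t: "SPD w 0 \<subseteq> SPD k t"
    using step.IH[OF k(2)] by (auto simp: eventually_sequentially)
  have "k \<in> S_known PD j (SPD j t)" using k unfolding S_known_def by blast
  then obtain t' where "SPD k t \<subseteq> SPD j t'"
    using exec step.prems k(2) unfolding discovery_execution_def by blast
  then show ?case
    using t discovery_SPD_mono[OF exec step.prems] by (blast intro: eventually_sequentiallyI[of t'])
qed

lemma discovery_eventually_receives_sink:
  fixes i :: "'p::finite"
  assumes exec: "discovery_execution PD F SPD" "i \<notin> F"
    and osr: "k_osr (safe_V F) (safe_E PD F) k" "0 < k"
    and sink: "sink_comp (safe_V F) (safe_E PD F) Vs"
  shows "\<exists>t. \<forall>w\<in>Vs. (w, PD w) \<in> SPD i t"
proof -
  have "eventually (\<lambda>t. \<forall>w\<in>Vs. SPD w 0 \<subseteq> SPD i t) sequentially"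
  proof (rule eventually_ball_finite[OF finite, rule_format])
    fix w assume "w \<in> Vs"
    then have "(i, w) \<in> (safe_E PD F)\<^sup>*"
      using k_osr_reaches_sink[OF osr sink] \<open>i \<notin> F\<close> by (simp add: safe_V_def)
    then show "eventually (\<lambda>t. SPD w 0 \<subseteq> SPD i t) sequentially"
      using discovery_propagates[OF exec(1) _ exec(2)] by blast
  qed
  then obtain t where "\<forall>w\<in>Vs. SPD w 0 \<subseteq> SPD i t"
    unfolding eventually_sequentially by blast
  moreover have "w \<notin> F" if "w \<in> Vs" for w
    using sink that unfolding sink_comp_def scc_def safe_V_def by blast
  moreover have "SPD w 0 = {(w, PD w)}" if "w \<notin> F" for w
    using exec(1) that unfolding discovery_execution_def by blast
  ultimately show ?thesis by blast
qed

lemma local_exits_from_sink_Byzantine: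
  assumes exec: "discovery_execution PD F SPD" "i \<notin> F"
    and sink: "sink_comp (safe_V F) (safe_E PD F) Vs"
    and "(a, b) \<in> local_E (SPD i t)" "a \<in> Vs" "b \<notin> Vs"
  shows "b \<in> F"
proof (rule ccontr)
  assume "b \<notin> F"
  have "Vs \<subseteq> safe_V F" using sink unfolding sink_comp_def scc_def by blast
  then have "a \<notin> F" using \<open>a \<in> Vs\<close> unfolding safe_V_def by blast
  obtain S where "(a, S) \<in> SPD i t" "b \<in> S" using assms(4) unfolding local_E_def by blast
  then have "b \<in> PD a" using discovery_correct_PD_genuine[OF exec] \<open>a \<notin> F\<close> by blast
  then have "(a, b) \<in> safe_E PD F" "b \<in> safe_V F - Vs"
    using \<open>a \<notin> F\<close> \<open>b \<notin> F\<close> \<open>b \<notin> Vs\<close> unfolding safe_E_def G_di_edges_def safe_V_def by auto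
  then show False using sink \<open>a \<in> Vs\<close> unfolding sink_comp_def by blast
qed

theorem theorem10:
  fixes PD :: "'p::finite \<Rightarrow> 'p set" and F :: "'p set" and f :: nat
    and SPD :: "'p \<Rightarrow> nat \<Rightarrow> ('p \<times> 'p set) set" and i :: 'p
  assumes "card F \<le> f"
    and "bft_cupft_requirements PD F f"
    and "discovery_execution PD F SPD"
    and "i \<notin> F"
  shows "\<exists>t. core_wait_cond PD i (SPD i t)"
proof -
  let ?V = "safe_V F" and ?E = "safe_E PD F"
  obtain Vs where sink: "sink_comp ?V ?E Vs" and osr: "k_osr ?V ?E (f + 1)"
    using assms(2) unfolding bft_cupft_requirements_def ext_k_osr_def by blast
  obtain t where received: "\<And>w. w \<in> Vs \<Longrightarrow> (w, PD w) \<in> SPD i t"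
    using discovery_eventually_receives_sink[OF assms(3,4) osr _ sink] by auto
  let ?X = "SPD i t"
  have "kappa_ge Vs (local_E ?X) (f + 1)"
  proof (rule kappa_ge_mono)
    show "kappa_ge Vs ?E (f + 1)" using osr sink unfolding k_osr_def by blast
    show "?E \<inter> (Vs \<times> Vs) \<subseteq> local_E ?X"
      using received unfolding safe_E_def G_di_edges_def local_E_def by blast
  qed
  moreover have "Vs \<subseteq> S_received i ?X"
  proof
    fix w assume "w \<in> Vs"
    then have "(w, PD w) \<in> ?X" by (rule received)
    then show "w \<in> S_received i ?X" unfolding S_received_def by (simp add: rev_image_eqI)
  qed
  moreover have "\<not> conn_gt Vl (local_E ?X) Vs K f" if "K \<subseteq> Vl - Vs" for Vl K
  proof (rule not_conn_gt_if_exits_in)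
    show "b \<in> F" if "(a, b) \<in> local_E ?X" "a \<in> Vs" "b \<notin> Vs" for a b
      using local_exits_from_sink_Byzantine[OF assms(3,4) sink that] .
    show "K \<inter> Vs = {}" using that by blast
  qed (simp_all add: assms(1))
  ultimately show ?thesis unfolding core_wait_cond_def Let_def by blast
qed

end
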